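(* Let $K_0,\dots,K_n$ be concave kernel functions such that for every $\mathbf{x}\in\mathbb{T}^n$ and $z\in\mathbb{T}$ with $F(\mathbf{x},z)=\overline{m}(\mathbf{x})$ one has $z\ne x_j$ for all $j=0,\dots,n$. For each $j$ let $(K_j^{(k)})_{k\in\mathbb{N}}$ be a sequence of concave kernel functions converging to $K_j$ locally uniformly on $(0,2\pi)$ (i.e. uniformly on every compact subset of $(0,2\pi)$). Then $\overline{m}^{(k)}(\mathbf{x})\to\overline{m}(\mathbf{x})$ uniformly on $\mathbb{T}^n$ as $k\to\infty$.
   Context: Identify the torus $\mathbb{T}=\mathbb{R}/2\pi\mathbb{Z}$ with $[0,2\pi)$. A concave kernel function is a $2\pi$-periodic function $K:\mathbb{R}\to[-\infty,\infty)$ which is real-valued and concave on $(0,2\pi)$ with $\lim_{t\downarrow0}K(t)=\lim_{t\uparrow2\pi}K(t)$ existing in $[-\infty,\infty)$ (this common value being $K(0)$). For $\mathbf{x}=(x_1,\dots,x_n)\in\mathbb{T}^n$ put $x_0=0$, $F(\mathbf{x},t)=K_0(t)+\sum_{j=1}^nK_j(t-x_j)$ and $\overline{m}(\mathbf{x})=\sup_{t\in\mathbb{T}}F(\mathbf{x},t)$; $F^{(k)}$ and $\overline{m}^{(k)}$ are defined in the same way from the kernels $K_0^{(k)},\dots,K_n^{(k)}$. *)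

theory Defs
  imports "HOL-Analysis.Analysis"
begin

definition concave_kernel :: "(real \<Rightarrow> ereal) \<Rightarrow> bool" where
  "concave_kernel K \<longleftrightarrow>
     (\<forall>t. K (t + 2 * pi) = K t) \<and>
     (\<forall>t. K t \<noteq> \<infinity>) \<and>
     (\<forall>t\<in>{0<..<2 * pi}. \<bar>K t\<bar> \<noteq> \<infinity>) \<and>
     concave_on {0<..<2 * pi} (\<lambda>t. real_of_ereal (K t)) \<and>
     (K \<longlongrightarrow> K 0) (at_right 0) \<and>
     (K \<longlongrightarrow> K 0) (at_left (2 * pi))"

definition kF :: "nat \<Rightarrow> (nat \<Rightarrow> real \<Rightarrow> ereal) \<Rightarrow> (nat \<Rightarrow> real) \<Rightarrow> real \<Rightarrow> ereal" where
  "kF n K x t = K 0 t + (\<Sum>j\<in>{1..n}. K j (t - x j))"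

definition mbar :: "nat \<Rightarrow> (nat \<Rightarrow> real \<Rightarrow> ereal) \<Rightarrow> (nat \<Rightarrow> real) \<Rightarrow> ereal" where
  "mbar n K x = (SUP t\<in>{0..<2 * pi}. kF n K x t)"

end

theory Submission
  imports Defs "HOL-Library.Real_Mod" "HOL-Library.Periodic_Fun"
begin

(*
  Concave kernels are continuous (as maps into [-\<infinity>, \<infinity>)), bounded above and 2\<pi>-periodic, and
  the approximating kernels converge uniformly away from the singular point 0.  Near 0 concavity
  still controls them from above: on (0, \<delta>] a concave function is bounded by its values at \<delta>
  and 2\<delta>, where it is uniformly close to the limit, and \<delta> can be chosen with K(\<delta>) \<le> K(2\<delta>) + e
  because K is bounded above.  Hence every term K_j^(k)(t - x_j) is at most K_j(u_j) + e for some
  u_j near t - x_j, and upper semicontinuity of the sum gives m^(k) \<le> m + e near each point.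
  Conversely, at a maximiser z of F(x,\<cdot>) all arguments z - x_j avoid the singularity by
  hypothesis, so there the kernels converge uniformly and m \<le> m^(k) + e nearby.  Both
  estimates hold uniformly on a neighbourhood, and compactness of the torus makes them global.
*)

section \<open>Concave functions, extended-real sums and compactness\<close>

lemma concave_on_le_extrapolation:
  fixes f :: "real \<Rightarrow> real"
  assumes f: "concave_on S f" and S: "s \<in> S" "d \<in> S"
    and c: "c \<in> closed_segment s d" and near: "dist s c \<le> dist c d"
  shows "f s \<le> f c + max 0 (f c - f d)"
proof -
  obtain u where u: "0 \<le> u" "u \<le> 1" and c_eq: "c = (1 - u) * s + u * d"
    using c by (auto simp: closed_segment_def)
  show ?thesis
  proof (cases "s = d")
    case False
    have "s - c = u * (s - d)" "c - d = (1 - u) * (s - d)"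
      by (simp_all add: c_eq algebra_simps)
    then have "u * \<bar>s - d\<bar> \<le> (1 - u) * \<bar>s - d\<bar>"
      using near u by (simp add: dist_real_def abs_mult)
    then have "u \<le> 1 / 2"
      using False by (simp add: mult_le_cancel_right)
    have "(1 - u) * f s + u * f d \<le> f c"
      using concave_onD[OF f, of u s d] u S c_eq by simp
    then have "(1 - u) * (f s - f c) \<le> u * (f c - f d)"
      by (simp add: algebra_simps)
    also have "\<dots> \<le> (1 - u) * max 0 (f c - f d)"
      using u \<open>u \<le> 1 / 2\<close> by (intro order.trans[OF mult_left_mono mult_right_mono]) auto
    finally show ?thesis
      using \<open>u \<le> 1 / 2\<close> by (simp add: mult_le_cancel_left_pos)
  qed (use c in simp)
qed

lemma concave_on_close_le_extrapolation:
  fixes a b :: "real \<Rightarrow> real"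
  assumes b: "concave_on S b" and "s \<in> S" "d \<in> S" "c \<in> closed_segment s d" "dist s c \<le> dist c d"
    and close: "\<bar>b c - a c\<bar> < e / 4" "\<bar>b d - a d\<bar> < e / 4" and step: "a c \<le> a d + e / 4" and "0 < e"
  shows "b s \<le> a c + e"
proof -
  have "b s \<le> b c + max 0 (b c - b d)"
    by (rule concave_on_le_extrapolation[OF assms(1-5)])
  moreover have "b c < a c + e / 4" "a d < b d + e / 4"
    using abs_less_iff[THEN iffD1, OF close(1)] abs_less_iff[THEN iffD1, OF close(2)] by linarith+
  ultimately show ?thesis
    using step \<open>0 < e\<close> by (cases "b d \<le> b c") (simp_all add: max_def)
qed

text \<open>Otherwise \<open>f (\<eta> / 2^m) \<ge> f \<eta> + m * e\<close> for every \<open>m\<close>, contradicting the bound \<open>M\<close>.\<close>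
lemma bounded_above_imp_doubling_step:
  fixes f :: "real \<Rightarrow> real"
  assumes "0 < \<eta>" "0 < e" and bound: "\<And>t. t \<in> {0<..\<eta>} \<Longrightarrow> f t \<le> M"
  shows "\<exists>\<delta>. 0 < \<delta> \<and> 2 * \<delta> \<le> \<eta> \<and> f \<delta> \<le> f (2 * \<delta>) + e"
proof (rule ccontr)
  assume "\<not> ?thesis"
  then have step: "\<And>\<delta>. 0 < \<delta> \<Longrightarrow> 2 * \<delta> \<le> \<eta> \<Longrightarrow> f (2 * \<delta>) + e < f \<delta>"
    by force
  have grow: "f \<eta> + real m * e \<le> f (\<eta> / 2 ^ m)" for m
  proof (induction m)
    case (Suc m)
    have "2 * (\<eta> / 2 ^ Suc m) \<le> \<eta>"
      using assms(1) by (simp add: divide_le_eq)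
    then have "f (\<eta> / 2 ^ m) + e < f (\<eta> / 2 ^ Suc m)"
      using step[of "\<eta> / 2 ^ Suc m"] assms(1) by simp
    with Suc show ?case
      by (simp add: algebra_simps)
  qed simp
  obtain m where m: "M - f \<eta> < real m * e"
    using ex_less_of_nat_mult[OF assms(2)] by blast
  have "f (\<eta> / 2 ^ m) \<le> M"
    using assms(1) by (intro bound) (simp add: divide_le_eq)
  with grow[of m] m show False
    by linarith
qed

lemma tendsto_sum_ereal_not_PInf:
  fixes f :: "'i \<Rightarrow> 'a \<Rightarrow> ereal"
  assumes "finite J" "\<And>j. j \<in> J \<Longrightarrow> (f j \<longlongrightarrow> l j) F" "\<And>j. j \<in> J \<Longrightarrow> l j \<noteq> \<infinity>"
  shows "((\<lambda>z. \<Sum>j\<in>J. f j z) \<longlongrightarrow> (\<Sum>j\<in>J. l j)) F"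
  using assms
proof (induction J rule: finite_induct)
  case (insert a J)
  have "(\<Sum>j\<in>J. l j) \<noteq> \<infinity>"
    using insert by (simp add: sum_Pinfty)
  then have "((\<lambda>z. f a z + (\<Sum>j\<in>J. f j z)) \<longlongrightarrow> l a + (\<Sum>j\<in>J. l j)) F"
    using insert by (intro tendsto_add_ereal_general) auto
  with insert show ?case
    by simp
qed simp

lemma sum_ereal_le_sum_add_const:
  assumes "\<And>j. j \<in> J \<Longrightarrow> a j \<le> b j + ereal c"
  shows "(\<Sum>j\<in>J. a j) \<le> (\<Sum>j\<in>J. b j) + ereal (real (card J) * c)"
proof -
  have "(\<Sum>j\<in>J. a j) \<le> (\<Sum>j\<in>J. b j + ereal c)"
    using assms by (rule sum_mono)
  also have "\<dots> = (\<Sum>j\<in>J. b j) + ereal (real (card J) * c)"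
    by (simp add: sum.distrib)
  finally show ?thesis .
qed

lemma tendsto_fst_nhds: "((\<lambda>p. fst p) \<longlongrightarrow> x) (nhds (x, t))"
  and tendsto_snd_nhds: "((\<lambda>p. snd p) \<longlongrightarrow> t) (nhds (x, t))"
  using tendsto_fst[OF filterlim_ident, of "(x, t)"] tendsto_snd[OF filterlim_ident, of "(x, t)"]
  by simp_all

lemma eventually_ball_compact:
  assumes "compact S" and local: "\<And>p. p \<in> S \<Longrightarrow> \<forall>\<^sub>F (i, q) in F \<times>\<^sub>F nhds p. P i q"
  shows "\<forall>\<^sub>F i in F. \<forall>q\<in>S. P i q"
proof -
  have "\<exists>U. open U \<and> p \<in> U \<and> (\<forall>\<^sub>F i in F. \<forall>q\<in>U. P i q)" if p: "p \<in> S" for p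
  proof -
    obtain Pf Pq where "eventually Pf F" "eventually Pq (nhds p)" and P: "\<And>i q. Pf i \<Longrightarrow> Pq q \<Longrightarrow> P i q"
      using local[OF p] unfolding eventually_prod_filter by auto
    then obtain U where "open U" "p \<in> U" "\<forall>q\<in>U. Pq q"
      unfolding eventually_nhds by blast
    moreover have "\<forall>\<^sub>F i in F. \<forall>q\<in>U. P i q"
      using \<open>eventually Pf F\<close> by (rule eventually_mono) (use P \<open>\<forall>q\<in>U. Pq q\<close> in blast)
    ultimately show ?thesis
      by blast
  qed
  then obtain U where U: "\<And>p. p \<in> S \<Longrightarrow> open (U p) \<and> p \<in> U p \<and> (\<forall>\<^sub>F i in F. \<forall>q\<in>U p. P i q)"
    by metis
  obtain D where D: "D \<subseteq> S" "finite D" "S \<subseteq> (\<Union>p\<in>D. U p)"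
    using compactE_image[OF \<open>compact S\<close>, of S U] U by blast
  have "\<forall>\<^sub>F i in F. \<forall>p\<in>D. \<forall>q\<in>U p. P i q"
    using D U by (intro eventually_ball_finite) auto
  then show ?thesis
    by (rule eventually_mono) (use D in blast)
qed

definition coordinatewise_nhds :: "'i set \<Rightarrow> ('i \<Rightarrow> real) \<Rightarrow> ('i \<Rightarrow> real) filter" where
  "coordinatewise_nhds J v = (INF r\<in>{0<..}. principal {u. \<forall>j\<in>J. \<bar>u j - v j\<bar> < r})"

lemma eventually_coordinatewise_nhds:
  "eventually P (coordinatewise_nhds J v) \<longleftrightarrow> (\<exists>r>0. \<forall>u. (\<forall>j\<in>J. \<bar>u j - v j\<bar> < r) \<longrightarrow> P u)"
proof -
  have "eventually P (coordinatewise_nhds J v) \<longleftrightarrow>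
      (\<exists>r\<in>{0<..}. eventually P (principal {u. \<forall>j\<in>J. \<bar>u j - v j\<bar> < (r::real)}))"
    unfolding coordinatewise_nhds_def
  proof (rule eventually_INF_base)
    fix a b :: real assume "a \<in> {0<..}" "b \<in> {0<..}"
    then show "\<exists>r\<in>{0<..}. principal {u. \<forall>j\<in>J. \<bar>u j - v j\<bar> < r} \<le>
        inf (principal {u. \<forall>j\<in>J. \<bar>u j - v j\<bar> < a}) (principal {u. \<forall>j\<in>J. \<bar>u j - v j\<bar> < b})"
      by (intro bexI[of _ "min a b"]) auto
  qed auto
  then show ?thesis
    by (auto simp: eventually_principal)
qed

lemma tendsto_coordinatewise_nhds: "j \<in> J \<Longrightarrow> ((\<lambda>u. u j) \<longlongrightarrow> v j) (coordinatewise_nhds J v)"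
  unfolding tendsto_iff eventually_coordinatewise_nhds dist_real_def by blast

section \<open>Concave kernels\<close>

lemma concave_kernel_rcong:
  assumes "concave_kernel K" "[s = t] (rmod (2 * pi))"
  shows "K s = K t"
proof -
  interpret periodic_fun_simple K "2 * pi"
    using assms(1) by unfold_locales (simp add: concave_kernel_def)
  from assms(2) obtain m where "t = s + of_int m * (2 * pi)"
    unfolding rcong_altdef by blast
  then show ?thesis
    using plus_of_int[of s m] by simp
qed

lemma concave_kernel_rmod:
  assumes "concave_kernel K"
  shows "K (t rmod (2 * pi)) = K t"
  by (rule concave_kernel_rcong[OF assms]) (intro rcong_rmod_left rcong_refl)

lemma concave_kernel_not_PInf: "concave_kernel K \<Longrightarrow> K t \<noteq> \<infinity>"
  by (simp add: concave_kernel_def)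

lemma concave_kernel_finite:
  "concave_kernel K \<Longrightarrow> t \<in> {0<..<2 * pi} \<Longrightarrow> K t = ereal (real_of_ereal (K t))"
  by (simp add: concave_kernel_def ereal_real')

lemma concave_kernel_finite_rcong:
  assumes K: "concave_kernel K" and t: "\<not> [t = 0] (rmod (2 * pi))"
  shows "K t = ereal (real_of_ereal (K t))"
proof -
  have "t rmod (2 * pi) \<in> {0<..<2 * pi}"
    using t rmod_nonneg[of "2 * pi" t] rmod_less[of "2 * pi" t]
    by (auto simp: rcong_0_iff order.order_iff_strict)
  then show ?thesis
    by (metis concave_kernel_finite[OF K] concave_kernel_rmod[OF K])
qed

lemma concave_kernel_continuous_on:
  assumes K: "concave_kernel K"
  shows "continuous_on {0<..<2 * pi} K"
proof -
  have "concave_on {0<..<2 * pi} (\<lambda>t. real_of_ereal (K t))"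
    using K by (simp add: concave_kernel_def)
  then have "continuous_on {0<..<2 * pi} (\<lambda>t. - real_of_ereal (K t))"
    by (intro convex_on_continuous) (auto simp: concave_on_def)
  then have "continuous_on {0<..<2 * pi} (\<lambda>t. - (- real_of_ereal (K t)))"
    by (rule continuous_on_minus)
  then have "continuous_on {0<..<2 * pi} (\<lambda>t. ereal (real_of_ereal (K t)))"
    by (intro continuous_on_ereal) simp
  then show ?thesis
    by (rule continuous_on_eq) (simp add: concave_kernel_finite[OF K, symmetric])
qed

lemma concave_kernel_isCont:
  assumes K: "concave_kernel K"
  shows "isCont K t"
proof -
  have base: "isCont K s" if s: "s \<in> {0..<2 * pi}" for s
  proof (cases "s = 0")
    case True
    have "(K \<longlongrightarrow> K 0) (at_left (2 * pi))"
      using K by (simp add: concave_kernel_def)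
    then have "((\<lambda>x. K (x + 2 * pi)) \<longlongrightarrow> K 0) (at_left 0)"
      unfolding at_left_to_0[of "2 * pi"] filterlim_def filtermap_filtermap by simp
    then have "(K \<longlongrightarrow> K 0) (at_left 0)"
      using K by (simp add: concave_kernel_def)
    moreover have "(K \<longlongrightarrow> K 0) (at_right 0)"
      using K by (simp add: concave_kernel_def)
    ultimately show ?thesis
      unfolding isCont_def True by (rule filterlim_split_at)
  next
    case False
    with s have "s \<in> {0<..<2 * pi}"
      by simp
    then show ?thesis
      using concave_kernel_continuous_on[OF K] continuous_on_eq_continuous_at[of "{0<..<2 * pi}" K]
      by simp
  qed
  define c where "c = t - t rmod (2 * pi)"
  have shift: "K (x - c) = K x" for x
  proof (rule concave_kernel_rcong[OF K])
    have "[0 = c] (rmod (2 * pi))"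
      unfolding c_def rcong_altdef rmod_def by (auto intro: exI[of _ "\<lfloor>t / (2 * pi)\<rfloor>"])
    then show "[x - c = x] (rmod (2 * pi))"
      using rcong_diff[OF rcong_refl[of x], of 0 c] by (simp add: rcong_sym_iff)
  qed
  have "isCont K (t - c)"
    using base[of "t - c"] rmod_nonneg[of "2 * pi" t] rmod_less[of "2 * pi" t] by (simp add: c_def)
  moreover have "isCont (\<lambda>x. x - c) t"
    by (intro continuous_intros)
  ultimately have "isCont (\<lambda>x. K (x - c)) t"
    using isCont_o2 by blast
  then show ?thesis
    by (simp add: shift)
qed

lemma concave_kernel_bounded_above:
  assumes K: "concave_kernel K"
  obtains M where "\<And>t. K t \<le> ereal M"
proof -
  have ne: "{0..2 * pi} \<noteq> {}"
    by simp
  have cont: "continuous_on {0..2 * pi} K"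
    using concave_kernel_isCont[OF K] by (simp add: continuous_at_imp_continuous_on)
  obtain t0 where t0: "\<And>t. t \<in> {0..2 * pi} \<Longrightarrow> K t \<le> K t0"
    using continuous_attains_sup[OF compact_Icc ne cont] by blast
  have "K t \<le> ereal (real_of_ereal (K t0))" for t
  proof -
    have "t rmod (2 * pi) \<in> {0..2 * pi}"
      using rmod_nonneg[of "2 * pi" t] rmod_le[of "2 * pi" t] by simp
    then have "K t \<le> K t0"
      using t0 concave_kernel_rmod[OF K, of t] by metis
    also have "\<dots> \<le> ereal (real_of_ereal (K t0))"
      using concave_kernel_not_PInf[OF K, of t0] by (cases "K t0") auto
    finally show ?thesis .
  qed
  then show ?thesis
    by (rule that)
qed

lemma kernel_sum_upper_semicontinuous:
  fixes n :: nat
  assumes K: "\<And>j. j \<le> n \<Longrightarrow> concave_kernel (K j)" and "(\<Sum>j\<le>n. K j (v j)) < C"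
  shows "\<exists>r>0. \<forall>u. (\<forall>j\<le>n. \<bar>u j - v j\<bar> < r) \<longrightarrow> (\<Sum>j\<le>n. K j (u j)) < C"
proof -
  have "((\<lambda>u. \<Sum>j\<le>n. K j (u j)) \<longlongrightarrow> (\<Sum>j\<le>n. K j (v j))) (coordinatewise_nhds {..n} v)"
  proof (rule tendsto_sum_ereal_not_PInf)
    fix j assume j: "j \<in> {..n}"
    then have "concave_kernel (K j)"
      using K by simp
    then show "((\<lambda>u. K j (u j)) \<longlongrightarrow> K j (v j)) (coordinatewise_nhds {..n} v)" "K j (v j) \<noteq> \<infinity>"
      using isCont_tendsto_compose[OF concave_kernel_isCont tendsto_coordinatewise_nhds[OF j]]
        concave_kernel_not_PInf by blast+
  qed simp
  from order_tendstoD(2)[OF this assms(2)] show ?thesis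
    by (simp add: eventually_coordinatewise_nhds Ball_def)
qed

lemma concave_kernel_le_extrapolation:
  assumes K: "concave_kernel K" and G: "concave_kernel G" and S: "s \<in> {0<..<2 * pi}" "d \<in> {0<..<2 * pi}"
    and c: "c \<in> closed_segment s d" "dist s c \<le> dist c d"
    and close: "\<bar>real_of_ereal (G c) - real_of_ereal (K c)\<bar> < e / 4"
      "\<bar>real_of_ereal (G d) - real_of_ereal (K d)\<bar> < e / 4"
    and step: "real_of_ereal (K c) \<le> real_of_ereal (K d) + e / 4" and "0 < e"
  shows "G s \<le> K c + ereal e"
proof -
  have "c \<in> {0<..<2 * pi}"
    using S c(1) by (auto simp: closed_segment_eq_real_ivl split: if_splits)
  have "concave_on {0<..<2 * pi} (\<lambda>t. real_of_ereal (G t))"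
    using G by (simp add: concave_kernel_def)
  then have "real_of_ereal (G s) \<le> real_of_ereal (K c) + e"
    by (rule concave_on_close_le_extrapolation[where a = "\<lambda>t. real_of_ereal (K t)"]) (use assms in auto)
  then show ?thesis
    using concave_kernel_finite[OF G S(1)] concave_kernel_finite[OF K \<open>c \<in> {0<..<2 * pi}\<close>]
    by (metis ereal_less_eq(3) plus_ereal.simps(1))
qed

lemma concave_kernel_le_nearby:
  assumes K: "concave_kernel K" and G: "concave_kernel G" and e: "0 < e"
    and \<delta>: "0 < \<delta>1" "0 < \<delta>2" "2 * \<delta>1 \<le> pi" "2 * \<delta>2 \<le> pi"
    and step: "real_of_ereal (K \<delta>1) \<le> real_of_ereal (K (2 * \<delta>1)) + e / 4"
      "real_of_ereal (K (2 * pi - \<delta>2)) \<le> real_of_ereal (K (2 * pi - 2 * \<delta>2)) + e / 4"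
    and close: "\<And>t. t \<in> {\<delta>1..2 * pi - \<delta>2} \<Longrightarrow> \<bar>real_of_ereal (G t) - real_of_ereal (K t)\<bar> < e / 4"
    and s: "s \<in> {0..<2 * pi}"
  shows "\<exists>u. \<bar>u - s\<bar> \<le> max \<delta>1 \<delta>2 \<and> G s \<le> K u + ereal e"
proof -
  have left: "G t \<le> K \<delta>1 + ereal e" if t: "t \<in> {0<..\<delta>1}" for t
    using t \<delta> e close[of \<delta>1] close[of "2 * \<delta>1"]
    by (intro concave_kernel_le_extrapolation[OF K G _ _ _ _ _ _ step(1)])
      (auto simp: closed_segment_eq_real_ivl dist_real_def)
  have right: "G t \<le> K (2 * pi - \<delta>2) + ereal e" if t: "t \<in> {2 * pi - \<delta>2..<2 * pi}" for t
    using t \<delta> e close[of "2 * pi - \<delta>2"] close[of "2 * pi - 2 * \<delta>2"]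
    by (intro concave_kernel_le_extrapolation[OF K G _ _ _ _ _ _ step(2)])
      (auto simp: closed_segment_eq_real_ivl dist_real_def)
  consider "s = 0" | "s \<in> {0<..\<delta>1}" | "s \<in> {\<delta>1..2 * pi - \<delta>2}" | "s \<in> {2 * pi - \<delta>2..<2 * pi}"
    using s by fastforce
  then show ?thesis
  proof cases
    case 1
    have "G 0 \<le> K \<delta>1 + ereal e"
    proof (rule tendsto_upperbound)
      show "(G \<longlongrightarrow> G 0) (at_right 0)"
        using G by (simp add: concave_kernel_def)
      show "\<forall>\<^sub>F t in at_right 0. G t \<le> K \<delta>1 + ereal e"
        using eventually_at_right_real[OF \<delta>(1)] by (rule eventually_mono) (auto intro: left)
    qed simp
    with 1 \<delta> show ?thesis
      by (intro exI[of _ \<delta>1]) auto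
  next
    case 2
    then show ?thesis
      using left[OF 2] \<delta> by (intro exI[of _ \<delta>1]) auto
  next
    case 3
    then have "s \<in> {0<..<2 * pi}" "real_of_ereal (G s) \<le> real_of_ereal (K s) + e"
      using \<delta> abs_less_iff[THEN iffD1, OF close[OF 3]] e by auto
    then have "G s \<le> K s + ereal e"
      using concave_kernel_finite[OF G] concave_kernel_finite[OF K] by (metis ereal_less_eq(3) plus_ereal.simps(1))
    then show ?thesis
      using \<delta> by (intro exI[of _ s]) auto
  next
    case 4
    then show ?thesis
      using right[OF 4] \<delta> by (intro exI[of _ "2 * pi - \<delta>2"]) auto
  qed
qed

lemma concave_kernel_le_nearby_periodic:
  assumes K: "concave_kernel K" and G: "concave_kernel G"
    and base: "\<And>s. s \<in> {0..<2 * pi} \<Longrightarrow> \<exists>u. \<bar>u - s\<bar> \<le> \<eta> \<and> G s \<le> K u + c"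
  shows "\<exists>u. \<bar>u - s\<bar> \<le> \<eta> \<and> G s \<le> K u + c"
proof -
  define s' where "s' = s rmod (2 * pi)"
  obtain u where u: "\<bar>u - s'\<bar> \<le> \<eta>" "G s' \<le> K u + c"
    using base[of s'] rmod_nonneg[of "2 * pi" s] rmod_less[of "2 * pi" s] by (auto simp: s'_def)
  have "[s' = s] (rmod (2 * pi))"
    unfolding s'_def by (intro rcong_rmod_left rcong_refl)
  then have "[u - s' + s' = u - s' + s] (rmod (2 * pi))"
    by (rule rcong_add[OF rcong_refl])
  then have "K u = K (u - s' + s)"
    by (simp add: concave_kernel_rcong[OF K])
  moreover have "G s' = G s"
    unfolding s'_def by (rule concave_kernel_rmod[OF G])
  ultimately show ?thesis
    using u by (intro exI[of _ "u - s' + s"]) auto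
qed

lemma concave_kernel_uniform_approx_above:
  assumes K: "concave_kernel K" and G: "\<And>k. concave_kernel (G k)"
    and conv: "\<And>C. compact C \<Longrightarrow> C \<subseteq> {0<..<2 * pi} \<Longrightarrow>
        uniform_limit C (\<lambda>k t. real_of_ereal (G k t)) (\<lambda>t. real_of_ereal (K t)) sequentially"
    and e: "0 < e" and \<eta>: "0 < \<eta>"
  shows "\<forall>\<^sub>F k in sequentially. \<forall>s. \<exists>u. \<bar>u - s\<bar> \<le> \<eta> \<and> G k s \<le> K u + ereal e"
proof -
  define a where "a t = real_of_ereal (K t)" for t
  obtain M where M: "\<And>t. K t \<le> ereal M"
    using concave_kernel_bounded_above[OF K] by blast
  define \<eta>' where "\<eta>' = min \<eta> pi"
  have \<eta>': "0 < \<eta>'" "\<eta>' \<le> \<eta>" "\<eta>' \<le> pi"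
    using \<eta> by (auto simp: \<eta>'_def)
  have aM: "a t \<le> M" if "t \<in> {0<..<2 * pi}" for t
    using M[of t] concave_kernel_finite[OF K that] unfolding a_def by (metis ereal_less_eq(3))
  obtain \<delta>1 where \<delta>1: "0 < \<delta>1" "2 * \<delta>1 \<le> \<eta>'" "a \<delta>1 \<le> a (2 * \<delta>1) + e / 4"
    using bounded_above_imp_doubling_step[of \<eta>' "e / 4" a M] \<eta>' e aM by auto
  obtain \<delta>2 where \<delta>2: "0 < \<delta>2" "2 * \<delta>2 \<le> \<eta>'" "a (2 * pi - \<delta>2) \<le> a (2 * pi - 2 * \<delta>2) + e / 4"
    using bounded_above_imp_doubling_step[of \<eta>' "e / 4" "\<lambda>t. a (2 * pi - t)" M] \<eta>' e aM by auto
  have "{\<delta>1..2 * pi - \<delta>2} \<subseteq> {0<..<2 * pi}"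
    using \<delta>1 \<delta>2 by auto
  then have "\<forall>\<^sub>F k in sequentially. \<forall>t\<in>{\<delta>1..2 * pi - \<delta>2}. dist (real_of_ereal (G k t)) (a t) < e / 4"
    using uniform_limitD[OF conv, of "{\<delta>1..2 * pi - \<delta>2}" "e / 4"] e unfolding a_def by auto
  then show ?thesis
  proof eventually_elim
    case (elim k)
    have "\<exists>u. \<bar>u - s\<bar> \<le> \<eta> \<and> G k s \<le> K u + ereal e" if "s \<in> {0..<2 * pi}" for s
    proof -
      have "\<exists>u. \<bar>u - s\<bar> \<le> max \<delta>1 \<delta>2 \<and> G k s \<le> K u + ereal e"
        using \<delta>1 \<delta>2 \<eta>' elim that
        by (intro concave_kernel_le_nearby[OF K G e]) (auto simp: a_def dist_real_def)
      moreover have "max \<delta>1 \<delta>2 \<le> \<eta>"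
        using \<delta>1 \<delta>2 \<eta>' by simp
      ultimately show ?thesis
        by force
    qed
    then show ?case
      using concave_kernel_le_nearby_periodic[OF K G] by blast
  qed
qed

lemma concave_kernel_uniform_approx_below:
  assumes K: "concave_kernel K" and G: "\<And>k. concave_kernel (G k)"
    and conv: "\<And>C. compact C \<Longrightarrow> C \<subseteq> {0<..<2 * pi} \<Longrightarrow>
        uniform_limit C (\<lambda>k t. real_of_ereal (G k t)) (\<lambda>t. real_of_ereal (K t)) sequentially"
    and "0 < e" "0 < \<delta>"
  shows "\<forall>\<^sub>F k in sequentially. \<forall>s\<in>{\<delta>..2 * pi - \<delta>}. K s \<le> G k s + ereal e"
proof -
  have sub: "{\<delta>..2 * pi - \<delta>} \<subseteq> {0<..<2 * pi}"
    using \<open>0 < \<delta>\<close> by auto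
  show ?thesis
    using uniform_limitD[OF conv[OF compact_Icc sub] \<open>0 < e\<close>]
  proof eventually_elim
    case (elim k)
    show ?case
    proof
      fix s assume s: "s \<in> {\<delta>..2 * pi - \<delta>}"
      then have "\<bar>real_of_ereal (G k s) - real_of_ereal (K s)\<bar> < e"
        using elim by (simp add: dist_real_def)
      then have "real_of_ereal (K s) \<le> real_of_ereal (G k s) + e"
        by linarith
      then show "K s \<le> G k s + ereal e"
        using s sub concave_kernel_finite[OF K, of s] concave_kernel_finite[OF G, of s]
        by (metis ereal_less_eq(3) plus_ereal.simps(1) subsetD)
    qed
  qed
qed

lemma concave_kernel_le_near_rmod:
  assumes K: "concave_kernel K" and G: "concave_kernel G"
    and le: "\<forall>\<sigma>\<in>{\<delta>..2 * pi - \<delta>}. K \<sigma> \<le> G \<sigma> + c"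
    and a: "2 * \<delta> \<le> a rmod (2 * pi)" "a rmod (2 * pi) + 2 * \<delta> \<le> 2 * pi" and s: "\<bar>s - a\<bar> < \<delta>"
  shows "K s \<le> G s + c"
proof -
  define \<sigma> where "\<sigma> = s - a + a rmod (2 * pi)"
  have "[a rmod (2 * pi) = a] (rmod (2 * pi))"
    by (intro rcong_rmod_left rcong_refl)
  then have "[\<sigma> = s - a + a] (rmod (2 * pi))"
    unfolding \<sigma>_def by (rule rcong_add[OF rcong_refl])
  then have "K \<sigma> = K s" "G \<sigma> = G s"
    by (simp_all add: concave_kernel_rcong[OF K] concave_kernel_rcong[OF G])
  moreover have "\<sigma> \<in> {\<delta>..2 * pi - \<delta>}"
    using a s by (auto simp: \<sigma>_def abs_less_iff)
  ultimately show ?thesis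
    using bspec[OF le, of \<sigma>] by simp
qed

section \<open>The functions \<open>kF\<close> and \<open>mbar\<close>\<close>

text \<open>The update \<open>x(0 := 0)\<close> supplies the node \<open>x\<^sub>0 = 0\<close>.\<close>
lemma kF_eq_sum: "kF n K x t = (\<Sum>j\<le>n. K j (t - (x(0 := 0)) j))"
proof -
  have "{..n} = insert 0 {1..n}"
    by auto
  moreover have "(\<Sum>j\<in>{1..n}. K j (t - (x(0 := 0)) j)) = (\<Sum>j\<in>{1..n}. K j (t - x j))"
    by (rule sum.cong) auto
  ultimately show ?thesis
    by (simp add: kF_def)
qed

lemma kF_rcong:
  assumes K: "\<And>j. j \<le> n \<Longrightarrow> concave_kernel (K j)"
    and t: "[t = t'] (rmod (2 * pi))" and x: "\<And>j. j \<in> {1..n} \<Longrightarrow> [x j = x' j] (rmod (2 * pi))"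
  shows "kF n K x t = kF n K x' t'"
  unfolding kF_def
proof (intro arg_cong2[where f = "(+)"] sum.cong refl)
  show "K 0 t = K 0 t'"
    by (rule concave_kernel_rcong[OF K[OF le0] t])
  fix j assume j: "j \<in> {1..n}"
  have "[t - x j = t' - x' j] (rmod (2 * pi))"
    using t x[OF j] by (rule rcong_diff)
  then show "K j (t - x j) = K j (t' - x' j)"
    using K j by (intro concave_kernel_rcong) auto
qed

lemma mbar_rcong:
  assumes K: "\<And>j. j \<le> n \<Longrightarrow> concave_kernel (K j)"
    and x: "\<And>j. j \<in> {1..n} \<Longrightarrow> [x j = x' j] (rmod (2 * pi))"
  shows "mbar n K x = mbar n K x'"
  unfolding mbar_def using kF_rcong[of n K, OF K rcong_refl x] by simp

lemma kF_le_mbar: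
  assumes K: "\<And>j. j \<le> n \<Longrightarrow> concave_kernel (K j)"
  shows "kF n K x t \<le> mbar n K x"
proof -
  have "kF n K x t = kF n K x (t rmod (2 * pi))"
    by (rule kF_rcong[of n K, OF K]) simp_all
  also have "\<dots> \<le> mbar n K x"
    unfolding mbar_def by (rule SUP_upper) (simp add: rmod_nonneg rmod_less)
  finally show ?thesis .
qed

lemma tendsto_kernel_argument:
  fixes f :: "'a \<Rightarrow> nat \<Rightarrow> real"
  assumes "(f \<longlongrightarrow> x) F" "(g \<longlongrightarrow> t) F"
  shows "((\<lambda>i. g i - ((f i)(0 := 0)) j) \<longlongrightarrow> t - (x(0 := 0)) j) F"
proof (cases "j = 0")
  case False
  have "isCont (\<lambda>x. x j) x"
    using continuous_on_product_coordinates[of j] continuous_on_eq_continuous_at[OF open_UNIV] by blast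
  then have "((\<lambda>i. f i j) \<longlongrightarrow> x j) F"
    using isCont_tendsto_compose[OF _ assms(1)] by blast
  with False show ?thesis
    by (simp add: tendsto_diff assms(2))
qed (simp add: assms(2))

lemma kF_tendsto:
  assumes K: "\<And>j. j \<le> n \<Longrightarrow> concave_kernel (K j)"
    and "(f \<longlongrightarrow> x) F" "(g \<longlongrightarrow> t) F"
  shows "((\<lambda>i. kF n K (f i) (g i)) \<longlongrightarrow> kF n K x t) F"
  unfolding kF_eq_sum
proof (rule tendsto_sum_ereal_not_PInf)
  fix j assume "j \<in> {..n}"
  then have "concave_kernel (K j)"
    using K by simp
  then show "((\<lambda>i. K j (g i - ((f i)(0 := 0)) j)) \<longlongrightarrow> K j (t - (x(0 := 0)) j)) F"
    "K j (t - (x(0 := 0)) j) \<noteq> \<infinity>"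
    using concave_kernel_isCont isCont_tendsto_compose tendsto_kernel_argument[OF assms(2,3)]
      concave_kernel_not_PInf by blast+
qed simp

lemma mbar_attained:
  assumes K: "\<And>j. j \<le> n \<Longrightarrow> concave_kernel (K j)"
  obtains z where "z \<in> {0..<2 * pi}" "kF n K x z = mbar n K x"
proof -
  have "isCont (kF n K x) t" for t
    unfolding isCont_def using kF_tendsto[of n K, OF K tendsto_const tendsto_ident_at] by simp
  then have "continuous_on {0..2 * pi} (kF n K x)"
    by (simp add: continuous_at_imp_continuous_on)
  then obtain z where z: "\<forall>t\<in>{0..2 * pi}. kF n K x t \<le> kF n K x z"
    using continuous_attains_sup[OF compact_Icc, of 0 "2 * pi"] by auto
  have "kF n K x z = kF n K x (z rmod (2 * pi))"
    by (rule kF_rcong[of n K, OF K]) simp_all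
  moreover have "mbar n K x \<le> kF n K x z"
    unfolding mbar_def using z by (intro SUP_least) auto
  ultimately have "kF n K x (z rmod (2 * pi)) = mbar n K x"
    using kF_le_mbar[of n K, OF K, of x "z rmod (2 * pi)"] by simp
  then show ?thesis
    using that rmod_nonneg[of "2 * pi" z] rmod_less[of "2 * pi" z] by simp
qed

lemma kF_finite:
  assumes K: "\<And>j. j \<le> n \<Longrightarrow> concave_kernel (K j)"
    and off: "\<And>j. j \<le> n \<Longrightarrow> \<not> [t = (x(0 := 0)) j] (rmod (2 * pi))"
  shows "kF n K x t = ereal (\<Sum>j\<le>n. real_of_ereal (K j (t - (x(0 := 0)) j)))"
proof -
  have fin: "K j (t - (x(0 := 0)) j) = ereal (real_of_ereal (K j (t - (x(0 := 0)) j)))" if "j \<le> n" for j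
  proof (rule concave_kernel_finite_rcong)
    show "concave_kernel (K j)"
      using K that .
    show "\<not> [t - (x(0 := 0)) j = 0] (rmod (2 * pi))"
      using off[OF that] by (simp add: rcong_0_iff flip: rcong_conv_diff_rmod_eq_0)
  qed
  show ?thesis
    unfolding kF_eq_sum sum_ereal[symmetric]
  proof (rule sum.cong[OF refl])
    show "K j (t - (x(0 := 0)) j) = ereal (real_of_ereal (K j (t - (x(0 := 0)) j)))" if "j \<in> {..n}" for j
      using that by (intro fin) simp
  qed
qed

lemma mbar_lower_semicontinuous:
  assumes K: "\<And>j. j \<le> n \<Longrightarrow> concave_kernel (K j)" and "C < mbar n K x0"
  shows "\<forall>\<^sub>F x in nhds x0. C < mbar n K x"
proof -
  obtain t where "C < kF n K x0 t"
    using assms(2) unfolding mbar_def less_SUP_iff by blast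
  moreover have "((\<lambda>x. kF n K x t) \<longlongrightarrow> kF n K x0 t) (nhds x0)"
    by (rule kF_tendsto[of n K, OF K filterlim_ident tendsto_const])
  ultimately have "\<forall>\<^sub>F x in nhds x0. C < kF n K x t"
    by (simp add: order_tendstoD(1))
  then show ?thesis
    by (rule eventually_mono) (use kF_le_mbar[of n K, OF K] in \<open>blast intro: less_le_trans\<close>)
qed

lemma mbar_upper_semicontinuous:
  assumes K: "\<And>j. j \<le> n \<Longrightarrow> concave_kernel (K j)" and "mbar n K x0 < C"
  shows "\<forall>\<^sub>F x in nhds x0. mbar n K x \<le> C"
proof -
  have "\<forall>\<^sub>F x in nhds x0. \<forall>t\<in>{0..2 * pi}. kF n K x t < C"
  proof (rule eventually_ball_compact[OF compact_Icc])
    fix t0 :: real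
    have "((\<lambda>p. kF n K (fst p) (snd p)) \<longlongrightarrow> kF n K x0 t0) (nhds (x0, t0))"
      using kF_tendsto[of n K, OF K tendsto_fst_nhds tendsto_snd_nhds] .
    moreover have "kF n K x0 t0 < C"
      using kF_le_mbar[of n K, OF K] assms(2) by (rule le_less_trans)
    ultimately show "\<forall>\<^sub>F (x, t) in nhds x0 \<times>\<^sub>F nhds t0. kF n K x t < C"
      unfolding nhds_prod[symmetric] case_prod_beta by (rule order_tendstoD(2))
  qed
  then show ?thesis
    unfolding mbar_def by (rule eventually_mono) (intro SUP_least, auto intro: less_imp_le)
qed

lemma kF_le_kF_add:
  assumes "\<And>j. j \<le> n \<Longrightarrow> K j (t - (x(0 := 0)) j) \<le> G j (t - (x(0 := 0)) j) + ereal c"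
  shows "kF n K x t \<le> kF n G x t + ereal (real (Suc n) * c)"
  using sum_ereal_le_sum_add_const[of "{..n}" "\<lambda>j. K j (t - (x(0 := 0)) j)"] assms
  by (simp add: kF_eq_sum)

lemma kF_le_sum_nearby:
  assumes "\<And>j. j \<le> n \<Longrightarrow> \<exists>u. \<bar>u - (t - (x(0 := 0)) j)\<bar> \<le> \<rho> \<and> G j (t - (x(0 := 0)) j) \<le> K j u + ereal c"
  shows "\<exists>u. (\<forall>j\<le>n. \<bar>u j - (t - (x(0 := 0)) j)\<bar> \<le> \<rho>) \<and>
    kF n G x t \<le> (\<Sum>j\<le>n. K j (u j)) + ereal (real (Suc n) * c)"
proof -
  obtain u where u: "\<forall>j. j \<le> n \<longrightarrow> \<bar>u j - (t - (x(0 := 0)) j)\<bar> \<le> \<rho> \<and> G j (t - (x(0 := 0)) j) \<le> K j (u j) + ereal c"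
    using choice[of "\<lambda>j u. j \<le> n \<longrightarrow> \<bar>u - (t - (x(0 := 0)) j)\<bar> \<le> \<rho> \<and> G j (t - (x(0 := 0)) j) \<le> K j u + ereal c"]
      assms by blast
  have "kF n G x t \<le> (\<Sum>j\<le>n. K j (u j)) + ereal (real (card {..n}) * c)"
    unfolding kF_eq_sum by (rule sum_ereal_le_sum_add_const) (use u in auto)
  with u show ?thesis
    by (intro exI[of _ u]) simp
qed

section \<open>Local estimates\<close>

lemma kF_approx_above_local:
  assumes K: "\<And>j. j \<le> n \<Longrightarrow> concave_kernel (K j)" and G: "\<And>k j. j \<le> n \<Longrightarrow> concave_kernel (G k j)"
    and conv: "\<And>j C. j \<le> n \<Longrightarrow> compact C \<Longrightarrow> C \<subseteq> {0<..<2 * pi} \<Longrightarrow>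
        uniform_limit C (\<lambda>k t. real_of_ereal (G k j t)) (\<lambda>t. real_of_ereal (K j t)) sequentially"
    and e: "0 < e" and r: "0 < r"
  shows "\<forall>\<^sub>F (k, p) in sequentially \<times>\<^sub>F nhds (x0, t0). \<exists>u. (\<forall>j\<le>n. \<bar>u j - (t0 - (x0(0 := 0)) j)\<bar> < r) \<and>
    kF n (G k) (fst p) (snd p) \<le> (\<Sum>j\<le>n. K j (u j)) + ereal e"
proof -
  define e' where "e' = e / real (Suc n)"
  have approx: "\<forall>\<^sub>F k in sequentially. \<forall>j\<in>{..n}. \<forall>s. \<exists>u. \<bar>u - s\<bar> \<le> r / 2 \<and> G k j s \<le> K j u + ereal e'"
  proof (rule eventually_ball_finite[OF finite_atMost], rule ballI)
    fix j assume "j \<in> {..n}"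
    then have j: "j \<le> n"
      by simp
    show "\<forall>\<^sub>F k in sequentially. \<forall>s. \<exists>u. \<bar>u - s\<bar> \<le> r / 2 \<and> G k j s \<le> K j u + ereal e'"
      using e r by (intro concave_kernel_uniform_approx_above[OF K[OF j] G[OF j] conv[OF j]]) (auto simp: e'_def)
  qed
  have near: "\<forall>\<^sub>F p in nhds (x0, t0). \<forall>j\<in>{..n}. \<bar>(snd p - ((fst p)(0 := 0)) j) - (t0 - (x0(0 := 0)) j)\<bar> < r / 2"
  proof (rule eventually_ball_finite[OF finite_atMost], rule ballI)
    fix j
    show "\<forall>\<^sub>F p in nhds (x0, t0). \<bar>(snd p - ((fst p)(0 := 0)) j) - (t0 - (x0(0 := 0)) j)\<bar> < r / 2"
      using tendstoD[OF tendsto_kernel_argument[OF tendsto_fst_nhds tendsto_snd_nhds], of "r / 2" j] r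
      by (simp add: dist_real_def)
  qed
  have estimate: "\<exists>u. (\<forall>j\<le>n. \<bar>u j - (t0 - (x0(0 := 0)) j)\<bar> < r) \<and> kF n (G k) x t \<le> (\<Sum>j\<le>n. K j (u j)) + ereal e"
    if approx_k: "\<forall>j\<in>{..n}. \<forall>s. \<exists>u. \<bar>u - s\<bar> \<le> r / 2 \<and> G k j s \<le> K j u + ereal e'"
      and close: "\<forall>j\<in>{..n}. \<bar>(t - (x(0 := 0)) j) - (t0 - (x0(0 := 0)) j)\<bar> < r / 2" for k x t
  proof -
    obtain u where u: "\<forall>j\<le>n. \<bar>u j - (t - (x(0 := 0)) j)\<bar> \<le> r / 2"
      and le: "kF n (G k) x t \<le> (\<Sum>j\<le>n. K j (u j)) + ereal (real (Suc n) * e')"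
      using kF_le_sum_nearby[of n t x "r / 2" "G k" K e'] approx_k by auto
    have "\<bar>u j - (t0 - (x0(0 := 0)) j)\<bar> < r" if "j \<le> n" for j
    proof -
      have "\<bar>u j - (t - (x(0 := 0)) j)\<bar> \<le> r / 2" "\<bar>(t - (x(0 := 0)) j) - (t0 - (x0(0 := 0)) j)\<bar> < r / 2"
        using u close that by auto
      then show ?thesis
        by linarith
    qed
    moreover have "kF n (G k) x t \<le> (\<Sum>j\<le>n. K j (u j)) + ereal e"
      using le by (simp add: e'_def)
    ultimately show ?thesis
      by blast
  qed
  show ?thesis
    using eventually_prodI[OF approx near] by (rule eventually_mono) (unfold case_prod_beta, blast intro: estimate)
qed

lemma mbar_upper_local:
  assumes K: "\<And>j. j \<le> n \<Longrightarrow> concave_kernel (K j)" and G: "\<And>k j. j \<le> n \<Longrightarrow> concave_kernel (G k j)"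
    and conv: "\<And>j C. j \<le> n \<Longrightarrow> compact C \<Longrightarrow> C \<subseteq> {0<..<2 * pi} \<Longrightarrow>
        uniform_limit C (\<lambda>k t. real_of_ereal (G k j t)) (\<lambda>t. real_of_ereal (K j t)) sequentially"
    and m0: "mbar n K x0 = ereal m0" and e: "0 < e"
  shows "\<forall>\<^sub>F (k, p) in sequentially \<times>\<^sub>F nhds (x0, t0). kF n (G k) (fst p) (snd p) \<le> mbar n K (fst p) + ereal e"
proof -
  define v where "v j = t0 - (x0(0 := 0)) j" for j
  have "(\<Sum>j\<le>n. K j (v j)) = kF n K x0 t0"
    by (simp add: kF_eq_sum v_def)
  also have "\<dots> \<le> ereal m0"
    using kF_le_mbar[of n K, OF K] m0 by metis
  also have "\<dots> < ereal (m0 + e / 4)"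
    using e by simp
  finally obtain r where r: "0 < r"
    and usc: "\<And>u. \<forall>j\<le>n. \<bar>u j - v j\<bar> < r \<Longrightarrow> (\<Sum>j\<le>n. K j (u j)) < ereal (m0 + e / 4)"
    using kernel_sum_upper_semicontinuous[of n K, OF K] by blast
  have "ereal (m0 - e / 2) < mbar n K x0"
    using e m0 by simp
  from mbar_lower_semicontinuous[of n K, OF K this]
  have "\<forall>\<^sub>F p in nhds (x0, t0). ereal (m0 - e / 2) < mbar n K (fst p)"
    using tendsto_fst_nhds unfolding filterlim_iff by blast
  then have lsc: "\<forall>\<^sub>F (k, p) in sequentially \<times>\<^sub>F nhds (x0, t0). ereal (m0 - e / 2) < mbar n K (fst p)"
    by (simp add: eventually_prod2)
  have approx: "\<forall>\<^sub>F (k, p) in sequentially \<times>\<^sub>F nhds (x0, t0). \<exists>u. (\<forall>j\<le>n. \<bar>u j - v j\<bar> < r) \<and>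
      kF n (G k) (fst p) (snd p) \<le> (\<Sum>j\<le>n. K j (u j)) + ereal (e / 4)"
    unfolding v_def using e r by (intro kF_approx_above_local[of n K G, OF K G conv]) simp_all
  show ?thesis
    using lsc approx
  proof eventually_elim
    case (elim q)
    obtain k x t where q: "q = (k, (x, t))"
      by (cases q) auto
    obtain u where "\<forall>j\<le>n. \<bar>u j - v j\<bar> < r" and le: "kF n (G k) x t \<le> (\<Sum>j\<le>n. K j (u j)) + ereal (e / 4)"
      using elim(2) q by auto
    then have "kF n (G k) x t \<le> ereal (m0 + e / 4) + ereal (e / 4)"
      using usc by (meson add_right_mono le less_imp_le order_trans)
    also have "\<dots> = ereal (m0 - e / 2) + ereal e"
      by simp
    also have "\<dots> \<le> mbar n K x + ereal e"
      using elim(1) q by (intro add_right_mono) simp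
    finally show ?case
      using q by simp
  qed
qed

lemma kF_approx_below_local:
  assumes K: "\<And>j. j \<le> n \<Longrightarrow> concave_kernel (K j)" and G: "\<And>k j. j \<le> n \<Longrightarrow> concave_kernel (G k j)"
    and conv: "\<And>j C. j \<le> n \<Longrightarrow> compact C \<Longrightarrow> C \<subseteq> {0<..<2 * pi} \<Longrightarrow>
        uniform_limit C (\<lambda>k t. real_of_ereal (G k j t)) (\<lambda>t. real_of_ereal (K j t)) sequentially"
    and off: "\<And>j. j \<le> n \<Longrightarrow> \<not> [z = (x0(0 := 0)) j] (rmod (2 * pi))" and e: "0 < e"
  shows "\<forall>\<^sub>F (k, x) in sequentially \<times>\<^sub>F nhds x0. kF n K x z \<le> kF n (G k) x z + ereal e"
proof -
  define w where "w j = (z - (x0(0 := 0)) j) rmod (2 * pi)" for j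
  have w: "w j \<in> {0<..<2 * pi}" if "j \<le> n" for j
    using off[OF that] rmod_nonneg[of "2 * pi" "z - (x0(0 := 0)) j"] rmod_less[of "2 * pi" "z - (x0(0 := 0)) j"]
    by (auto simp: w_def rcong_conv_diff_rmod_eq_0 order.order_iff_strict)
  define \<delta> where "\<delta> j = min (w j) (2 * pi - w j) / 2" for j
  have \<delta>: "0 < \<delta> j" "2 * \<delta> j \<le> w j" "w j + 2 * \<delta> j \<le> 2 * pi" if "j \<le> n" for j
    using w[OF that] by (auto simp: \<delta>_def)
  define e' where "e' = e / real (Suc n)"
  have approx: "\<forall>\<^sub>F k in sequentially. \<forall>j\<in>{..n}. \<forall>s\<in>{\<delta> j..2 * pi - \<delta> j}. K j s \<le> G k j s + ereal e'"
  proof (rule eventually_ball_finite[OF finite_atMost], rule ballI)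
    fix j assume "j \<in> {..n}"
    then have j: "j \<le> n"
      by simp
    show "\<forall>\<^sub>F k in sequentially. \<forall>s\<in>{\<delta> j..2 * pi - \<delta> j}. K j s \<le> G k j s + ereal e'"
      using e \<delta>[OF j] by (intro concave_kernel_uniform_approx_below[OF K[OF j] G[OF j] conv[OF j]]) (auto simp: e'_def)
  qed
  have near: "\<forall>\<^sub>F x in nhds x0. \<forall>j\<in>{..n}. \<bar>(z - (x(0 := 0)) j) - (z - (x0(0 := 0)) j)\<bar> < \<delta> j"
  proof (rule eventually_ball_finite[OF finite_atMost], rule ballI)
    fix j assume "j \<in> {..n}"
    then show "\<forall>\<^sub>F x in nhds x0. \<bar>(z - (x(0 := 0)) j) - (z - (x0(0 := 0)) j)\<bar> < \<delta> j"
      using tendstoD[OF tendsto_kernel_argument[OF filterlim_ident tendsto_const], of "\<delta> j" j] \<delta>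
      by (simp add: dist_real_def)
  qed
  have estimate: "kF n K x z \<le> kF n (G k) x z + ereal e"
    if approx_k: "\<forall>j\<in>{..n}. \<forall>s\<in>{\<delta> j..2 * pi - \<delta> j}. K j s \<le> G k j s + ereal e'"
      and close: "\<forall>j\<in>{..n}. \<bar>(z - (x(0 := 0)) j) - (z - (x0(0 := 0)) j)\<bar> < \<delta> j" for k x
  proof -
    have "kF n K x z \<le> kF n (G k) x z + ereal (real (Suc n) * e')"
    proof (rule kF_le_kF_add)
      fix j assume j: "j \<le> n"
      show "K j (z - (x(0 := 0)) j) \<le> G k j (z - (x(0 := 0)) j) + ereal e'"
      proof (rule concave_kernel_le_near_rmod[OF K[OF j] G[OF j], where a = "z - (x0(0 := 0)) j"])
        show "\<forall>\<sigma>\<in>{\<delta> j..2 * pi - \<delta> j}. K j \<sigma> \<le> G k j \<sigma> + ereal e'"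
          using approx_k j by simp
        show "2 * \<delta> j \<le> (z - (x0(0 := 0)) j) rmod (2 * pi)"
          "(z - (x0(0 := 0)) j) rmod (2 * pi) + 2 * \<delta> j \<le> 2 * pi"
          using \<delta>[OF j] by (simp_all add: w_def)
        show "\<bar>(z - (x(0 := 0)) j) - (z - (x0(0 := 0)) j)\<bar> < \<delta> j"
          using bspec[OF close, of j] j by simp
      qed
    qed
    then show ?thesis
      by (simp add: e'_def)
  qed
  show ?thesis
    using eventually_prodI[OF approx near] by (rule eventually_mono) (unfold case_prod_beta, blast intro: estimate)
qed

lemma mbar_lower_local:
  assumes K: "\<And>j. j \<le> n \<Longrightarrow> concave_kernel (K j)" and G: "\<And>k j. j \<le> n \<Longrightarrow> concave_kernel (G k j)"
    and conv: "\<And>j C. j \<le> n \<Longrightarrow> compact C \<Longrightarrow> C \<subseteq> {0<..<2 * pi} \<Longrightarrow>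
        uniform_limit C (\<lambda>k t. real_of_ereal (G k j t)) (\<lambda>t. real_of_ereal (K j t)) sequentially"
    and z: "kF n K x0 z = mbar n K x0"
    and off: "\<And>j. j \<le> n \<Longrightarrow> \<not> [z = (x0(0 := 0)) j] (rmod (2 * pi))"
    and e: "0 < e"
  shows "\<forall>\<^sub>F (k, x) in sequentially \<times>\<^sub>F nhds x0. mbar n K x \<le> mbar n (G k) x + ereal e"
proof -
  define m0 where "m0 = (\<Sum>j\<le>n. real_of_ereal (K j (z - (x0(0 := 0)) j)))"
  have m0: "mbar n K x0 = ereal m0"
    using kF_finite[of n K, OF K off] z by (simp add: m0_def)
  have "ereal (m0 - e / 3) < kF n K x0 z"
    using z m0 e by simp
  with kF_tendsto[of n K, OF K filterlim_ident tendsto_const]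
  have lower: "\<forall>\<^sub>F x in nhds x0. ereal (m0 - e / 3) < kF n K x z"
    by (rule order_tendstoD(1))
  have upper: "\<forall>\<^sub>F x in nhds x0. mbar n K x \<le> ereal (m0 + e / 3)"
    by (rule mbar_upper_semicontinuous[OF K]) (use m0 e in auto)
  have "\<forall>\<^sub>F x in nhds x0. ereal (m0 - e / 3) < kF n K x z \<and> mbar n K x \<le> ereal (m0 + e / 3)"
    using lower upper by (rule eventually_conj)
  then have near: "\<forall>\<^sub>F (k, x) in sequentially \<times>\<^sub>F nhds x0. ereal (m0 - e / 3) < kF n K x z \<and> mbar n K x \<le> ereal (m0 + e / 3)"
    by (simp add: eventually_prod2)
  have approx: "\<forall>\<^sub>F (k, x) in sequentially \<times>\<^sub>F nhds x0. kF n K x z \<le> kF n (G k) x z + ereal (e / 3)"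
    using e by (intro kF_approx_below_local[of n K G, OF K G conv off]) auto
  show ?thesis
    using near approx
  proof eventually_elim
    case (elim q)
    obtain k x where q: "q = (k, x)"
      by (cases q)
    have "mbar n K x \<le> ereal (m0 + e / 3)"
      using elim q by simp
    also have "\<dots> = ereal (m0 - e / 3) + ereal (2 * e / 3)"
      by simp
    also have "\<dots> \<le> kF n K x z + ereal (2 * e / 3)"
      using elim q by (intro add_right_mono) (simp add: less_imp_le)
    also have "\<dots> \<le> (kF n (G k) x z + ereal (e / 3)) + ereal (2 * e / 3)"
      using elim q by (intro add_right_mono) simp
    also have "\<dots> \<le> mbar n (G k) x + ereal e"
      using kF_le_mbar[of n "G k", OF G] by (simp add: add.assoc add_right_mono)
    finally show ?case
      using q by simp
  qed
qed

section \<open>Uniform convergence of \<open>mbar\<close>\<close>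

definition torus_rep :: "nat \<Rightarrow> (nat \<Rightarrow> real) \<Rightarrow> nat \<Rightarrow> real" where
  "torus_rep n x j = (if j \<in> {1..n} then x j rmod (2 * pi) else 0)"

lemma torus_rep_rcong: "j \<in> {1..n} \<Longrightarrow> [torus_rep n x j = x j] (rmod (2 * pi))"
  by (simp add: torus_rep_def rcong_rmod_left)

lemma torus_rep_mem: "j \<in> {1..n} \<Longrightarrow> torus_rep n x j \<in> {0..<2 * pi}"
  by (simp add: torus_rep_def rmod_nonneg rmod_less)

lemma torus_rep_in_box: "torus_rep n x \<in> Pi UNIV (\<lambda>j. if j \<in> {1..n} then {0..2 * pi} else {0})"
  using torus_rep_mem[of _ n x] by (auto simp: torus_rep_def less_imp_le)

lemma compact_box: "compact (Pi UNIV (\<lambda>j. if j \<in> {1..n} then {0..2 * pi} else {0 :: real}))"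
proof -
  have "compactin (product_topology (\<lambda>j. euclidean) UNIV)
      (PiE UNIV (\<lambda>j. if j \<in> {1..n} then {0..2 * pi} else {0 :: real}))"
    by (subst compactin_PiE) auto
  then show ?thesis
    by (simp add: euclidean_product_topology PiE_UNIV_domain)
qed

lemma
  assumes K: "\<And>j. j \<le> n \<Longrightarrow> concave_kernel (K j)"
  shows kF_torus_rep: "kF n K (torus_rep n x) t = kF n K x t"
    and mbar_torus_rep: "mbar n K (torus_rep n x) = mbar n K x"
  using kF_rcong[of n K, OF K rcong_refl torus_rep_rcong] mbar_rcong[of n K, OF K torus_rep_rcong]
  by simp_all

lemma mbar_uniform_approx:
  assumes K: "\<And>j. j \<le> n \<Longrightarrow> concave_kernel (K j)" and G: "\<And>k j. j \<le> n \<Longrightarrow> concave_kernel (G k j)"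
    and conv: "\<And>j C. j \<le> n \<Longrightarrow> compact C \<Longrightarrow> C \<subseteq> {0<..<2 * pi} \<Longrightarrow>
        uniform_limit C (\<lambda>k t. real_of_ereal (G k j t)) (\<lambda>t. real_of_ereal (K j t)) sequentially"
    and off_nodes: "\<And>x. \<exists>z. kF n K x z = mbar n K x \<and> (\<forall>j\<le>n. \<not> [z = (x(0 := 0)) j] (rmod (2 * pi)))"
    and e: "0 < e"
  shows "\<forall>\<^sub>F k in sequentially. \<forall>x. mbar n (G k) x \<le> mbar n K x + ereal e \<and> mbar n K x \<le> mbar n (G k) x + ereal e"
proof -
  define B where "B = Pi UNIV (\<lambda>j. if j \<in> {1..n} then {0..2 * pi} else {0 :: real})"
  have B: "compact B"
    unfolding B_def by (rule compact_box)
  have upper: "\<forall>\<^sub>F k in sequentially. \<forall>p\<in>B \<times> {0..2 * pi}. kF n (G k) (fst p) (snd p) \<le> mbar n K (fst p) + ereal e"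
  proof (rule eventually_ball_compact[OF compact_Times[OF B compact_Icc]])
    fix p :: "(nat \<Rightarrow> real) \<times> real"
    obtain m0 where "mbar n K (fst p) = ereal m0"
      using off_nodes[of "fst p"] kF_finite[of n K, OF K] by metis
    from mbar_upper_local[of n K G, OF K G conv this e, of "snd p"]
    show "\<forall>\<^sub>F (k, q) in sequentially \<times>\<^sub>F nhds p. kF n (G k) (fst q) (snd q) \<le> mbar n K (fst q) + ereal e"
      by simp
  qed
  have lower: "\<forall>\<^sub>F k in sequentially. \<forall>x\<in>B. mbar n K x \<le> mbar n (G k) x + ereal e"
  proof (rule eventually_ball_compact[OF B])
    fix x0
    obtain z where "kF n K x0 z = mbar n K x0" "\<forall>j\<le>n. \<not> [z = (x0(0 := 0)) j] (rmod (2 * pi))"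
      using off_nodes by blast
    then show "\<forall>\<^sub>F (k, x) in sequentially \<times>\<^sub>F nhds x0. mbar n K x \<le> mbar n (G k) x + ereal e"
      using mbar_lower_local[of n K G, OF K G conv _ _ e] by blast
  qed
  show ?thesis
    using upper lower
  proof eventually_elim
    case (elim k)
    show ?case
    proof
      fix x
      have rep: "torus_rep n x \<in> B"
        unfolding B_def by (rule torus_rep_in_box)
      have "mbar n (G k) (torus_rep n x) \<le> mbar n K (torus_rep n x) + ereal e"
        unfolding mbar_def[of n "G k"] using elim rep by (intro SUP_least) auto
      moreover have "mbar n K (torus_rep n x) \<le> mbar n (G k) (torus_rep n x) + ereal e"
        using elim rep by blast
      ultimately show "mbar n (G k) x \<le> mbar n K x + ereal e \<and> mbar n K x \<le> mbar n (G k) x + ereal e"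
        using mbar_torus_rep[of n K, OF K] mbar_torus_rep[of n "G k", OF G] by simp
    qed
  qed
qed

lemma ex_maximizer_off_nodes:
  assumes K: "\<And>j. j \<le> n \<Longrightarrow> concave_kernel (K j)"
    and nonsing: "\<And>x z. (\<forall>j\<in>{1..n}. x j \<in> {0..<2 * pi}) \<Longrightarrow> z \<in> {0..<2 * pi} \<Longrightarrow>
        kF n K x z = mbar n K x \<Longrightarrow> z \<noteq> 0 \<and> (\<forall>j\<in>{1..n}. z \<noteq> x j)"
  shows "\<exists>z. kF n K x z = mbar n K x \<and> (\<forall>j\<le>n. \<not> [z = (x(0 := 0)) j] (rmod (2 * pi)))"
proof -
  define x' where "x' = torus_rep n x"
  obtain z where z: "z \<in> {0..<2 * pi}" "kF n K x' z = mbar n K x'"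
    using mbar_attained[of n K, OF K] by blast
  have x': "\<forall>j\<in>{1..n}. x' j \<in> {0..<2 * pi}"
    unfolding x'_def using torus_rep_mem by blast
  have ns: "z \<noteq> 0 \<and> (\<forall>j\<in>{1..n}. z \<noteq> x' j)"
    by (rule nonsing[OF x' z])
  have "\<not> [z = (x(0 := 0)) j] (rmod (2 * pi))" if "j \<le> n" for j
  proof
    assume "[z = (x(0 := 0)) j] (rmod (2 * pi))"
    moreover have "[(x(0 := 0)) j = (x'(0 := 0)) j] (rmod (2 * pi))"
      using torus_rep_rcong[of j n x] that by (cases "j = 0") (auto simp: x'_def rcong_sym_iff)
    ultimately have "[z = (x'(0 := 0)) j] (rmod (2 * pi))"
      by (rule rcong_trans)
    moreover have "(x'(0 := 0)) j \<in> {0..<2 * pi}"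
      using x' that by (cases "j = 0") auto
    ultimately have "z = (x'(0 := 0)) j"
      using z(1) by (intro rcong_imp_eq) auto
    with ns that show False
      by (cases "j = 0") auto
  qed
  moreover have "kF n K x z = mbar n K x"
    using z(2) kF_torus_rep[of n K, OF K] mbar_torus_rep[of n K, OF K] by (simp add: x'_def)
  ultimately show ?thesis
    by (intro exI[of _ z]) simp
qed

theorem theorem4p7:
  fixes n :: nat
    and K :: "nat \<Rightarrow> real \<Rightarrow> ereal"
    and Kk :: "nat \<Rightarrow> nat \<Rightarrow> real \<Rightarrow> ereal"
  assumes kern: "\<And>j. j \<le> n \<Longrightarrow> concave_kernel (K j)"
    and kernk: "\<And>k j. j \<le> n \<Longrightarrow> concave_kernel (Kk k j)"
    and nonsing: "\<And>x z. (\<forall>j\<in>{1..n}. x j \<in> {0..<2 * pi}) \<Longrightarrow> z \<in> {0..<2 * pi} \<Longrightarrow>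
        kF n K x z = mbar n K x \<Longrightarrow> z \<noteq> 0 \<and> (\<forall>j\<in>{1..n}. z \<noteq> x j)"
    and conv: "\<And>j C. j \<le> n \<Longrightarrow> compact C \<Longrightarrow> C \<subseteq> {0<..<2 * pi} \<Longrightarrow>
        uniform_limit C (\<lambda>k t. real_of_ereal (Kk k j t)) (\<lambda>t. real_of_ereal (K j t)) sequentially"
  shows "\<forall>e>0. \<forall>\<^sub>F k in sequentially. \<forall>x. (\<forall>j\<in>{1..n}. x j \<in> {0..<2 * pi}) \<longrightarrow>
           mbar n (Kk k) x \<le> mbar n K x + ereal e \<and> mbar n K x \<le> mbar n (Kk k) x + ereal e"
proof (intro allI impI)
  fix e :: real
  assume "0 < e"
  have off_nodes: "\<exists>z. kF n K x z = mbar n K x \<and> (\<forall>j\<le>n. \<not> [z = (x(0 := 0)) j] (rmod (2 * pi)))" for x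
    by (rule ex_maximizer_off_nodes[of n K, OF kern nonsing])
  have "\<forall>\<^sub>F k in sequentially. \<forall>x. mbar n (Kk k) x \<le> mbar n K x + ereal e \<and> mbar n K x \<le> mbar n (Kk k) x + ereal e"
    by (rule mbar_uniform_approx[of n K Kk, OF kern kernk conv off_nodes \<open>0 < e\<close>])
  then show "\<forall>\<^sub>F k in sequentially. \<forall>x. (\<forall>j\<in>{1..n}. x j \<in> {0..<2 * pi}) \<longrightarrow>
      mbar n (Kk k) x \<le> mbar n K x + ereal e \<and> mbar n K x \<le> mbar n (Kk k) x + ereal e"
    by (rule eventually_mono) blast
qed

end
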